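(* Fix $B\in\mathbb N$ and allocation functions $w_j$, $j\in[B]$, where $w_j$ maps $\mu^{j-1}=(\mu_1,\dots,\mu_{j-1})\in((\Delta_{\mathcal X})^K)^{j-1}$ to $\Delta_K$ ($w_1$ a constant). Consider the batched sampling scheme with horizon $T$: in batch $j=1,\dots,B$ each arm $a$ is pulled exactly $w_j(a)(Q^{j-1})\,T/B$ times (horizons $T$ are restricted to those for which these counts are integers), each pull of arm $a$ yields an independent sample from $\nu_a$, and $Q_{j,a}$ is the empirical distribution of the samples of arm $a$ in batch $j$ (a fixed arbitrary distribution if there are none), $Q_j=(Q_{j,a})_a$, $Q^j=(Q_1,\dots,Q_j)$. Then for every set $\Gamma\subseteq((\Delta_{\mathcal X})^K)^B$, $$\liminf_{T\to\infty}-\frac1T\log P_\nu\big[Q^B\in\Gamma\big]\ \ge\ \inf_{\mu^B\in\bar\Gamma}\ \frac1B\sum_{j=1}^B\sum_{a=1}^Kw_j(a)(\mu^{j-1})\,D(\mu_{j,a}\|\nu_a),$$ where $\bar\Gamma$ is the closure of $\Gamma$ and $\mu^B=(\mu_1,\dots,\mu_B)$ with $\mu_j=(\mu_{j,a})_a$.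
   Context: $\mathcal X$ is a finite set, $\Delta_{\mathcal X}$ the probability distributions on $\mathcal X$, $\Delta_K$ the simplex on $[K]$, $D$ the KL divergence. $\nu=(\nu_a)_{a\in[K]}$ is a bandit with each $\nu_a\in\Delta_{\mathcal X}$ having full support on $\mathcal X$; $P_\nu$ denotes the law of the sampling scheme under $\nu$. *)

theory Defs
  imports "HOL-Analysis.Analysis" "HOL-Probability.Probability"
begin

definition pdists :: "('x::finite \<Rightarrow> real) set" where
  "pdists = {p. (\<forall>x. 0 \<le> p x) \<and> (\<Sum>x\<in>UNIV. p x) = 1}"

definition KL :: "('x::finite \<Rightarrow> real) \<Rightarrow> ('x \<Rightarrow> real) \<Rightarrow> real" where
  "KL p q = (\<Sum>x\<in>UNIV. if p x = 0 then 0 else p x * ln (p x / q x))"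

(* sequences mu^B = (mu_1,...,mu_B) of K-tuples of distributions, encoded as
   functions nat => arm => distribution, with mu_j = 0 outside 1..B *)
definition DSeq :: "nat \<Rightarrow> (nat \<Rightarrow> 'k \<Rightarrow> 'x::finite \<Rightarrow> real) set" where
  "DSeq B = {\<mu>. \<forall>j. (j \<in> {1..B} \<longrightarrow> (\<forall>a. \<mu> j a \<in> pdists))
                  \<and> (j \<notin> {1..B} \<longrightarrow> \<mu> j = (\<lambda>_ _. 0))}"

(* the prefix mu^{j-1} = (mu_1,...,mu_{j-1}) *)
definition prefix :: "nat \<Rightarrow> (nat \<Rightarrow> 'k \<Rightarrow> 'x \<Rightarrow> real) \<Rightarrow> (nat \<Rightarrow> 'k \<Rightarrow> 'x \<Rightarrow> real)" where
  "prefix j \<mu> = (\<lambda>i. if 1 \<le> i \<and> i < j then \<mu> i else (\<lambda>_ _. 0))"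

primrec iid :: "nat \<Rightarrow> 'x pmf \<Rightarrow> 'x list pmf" where
  "iid 0 p = return_pmf []"
| "iid (Suc n) p = bind_pmf p (\<lambda>x. map_pmf (Cons x) (iid n p))"

definition emp :: "('x \<Rightarrow> real) \<Rightarrow> 'x list \<Rightarrow> ('x \<Rightarrow> real)" where
  "emp q0 xs = (if xs = [] then q0 else (\<lambda>x. real (count_list xs x) / real (length xs)))"

definition pulls :: "nat \<Rightarrow> nat \<Rightarrow> (nat \<Rightarrow> (nat \<Rightarrow> 'k \<Rightarrow> 'x \<Rightarrow> real) \<Rightarrow> 'k \<Rightarrow> real)
                     \<Rightarrow> nat \<Rightarrow> (nat \<Rightarrow> 'k \<Rightarrow> 'x \<Rightarrow> real) \<Rightarrow> 'k \<Rightarrow> nat" where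
  "pulls T B w j h a = nat \<lfloor>w j h a * real T / real B\<rfloor>"

definition batch :: "('x \<Rightarrow> real) \<Rightarrow> ('k \<Rightarrow> 'x pmf) \<Rightarrow> ('k \<Rightarrow> nat) \<Rightarrow> ('k \<Rightarrow> 'x \<Rightarrow> real) pmf" where
  "batch q0 \<nu> n = Pi_pmf UNIV q0 (\<lambda>a. map_pmf (emp q0) (iid (n a) (\<nu> a)))"

(* law of Q^j (entries beyond j are 0) *)
primrec scheme :: "nat \<Rightarrow> nat \<Rightarrow> (nat \<Rightarrow> (nat \<Rightarrow> 'k \<Rightarrow> 'x \<Rightarrow> real) \<Rightarrow> 'k \<Rightarrow> real)
          \<Rightarrow> ('k \<Rightarrow> 'x pmf) \<Rightarrow> ('x \<Rightarrow> real) \<Rightarrow> nat \<Rightarrow> (nat \<Rightarrow> 'k \<Rightarrow> 'x \<Rightarrow> real) pmf" where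
  "scheme T B w \<nu> q0 0 = return_pmf (\<lambda>_ _ _. 0)"
| "scheme T B w \<nu> q0 (Suc j) =
     bind_pmf (scheme T B w \<nu> q0 j)
       (\<lambda>h. map_pmf (\<lambda>q. h(Suc j := q)) (batch q0 \<nu> (pulls T B w (Suc j) h)))"

definition admissible :: "nat \<Rightarrow> (nat \<Rightarrow> (nat \<Rightarrow> 'k \<Rightarrow> 'x \<Rightarrow> real) \<Rightarrow> 'k \<Rightarrow> real)
          \<Rightarrow> ('k \<Rightarrow> 'x pmf) \<Rightarrow> ('x \<Rightarrow> real) \<Rightarrow> nat set" where
  "admissible B w \<nu> q0 = {T. 0 < T \<and> (\<forall>j\<in>{1..B}. \<forall>h\<in>set_pmf (scheme T B w \<nu> q0 (j - 1)).
        \<forall>a. w j h a * real T / real B \<in> \<int>)}"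

definition rate :: "nat \<Rightarrow> real \<Rightarrow> ereal" where
  "rate T P = (if P = 0 then \<infinity> else ereal (- ln P / real T))"

definition cost :: "nat \<Rightarrow> (nat \<Rightarrow> (nat \<Rightarrow> 'k::finite \<Rightarrow> 'x::finite \<Rightarrow> real) \<Rightarrow> 'k \<Rightarrow> real)
          \<Rightarrow> ('k \<Rightarrow> 'x pmf) \<Rightarrow> (nat \<Rightarrow> 'k \<Rightarrow> 'x \<Rightarrow> real) \<Rightarrow> real" where
  "cost B w \<nu> \<mu> = (1 / real B) * (\<Sum>j=1..B. \<Sum>a\<in>UNIV. w j (prefix j \<mu>) a * KL (\<mu> j a) (pmf (\<nu> a)))"

end

theory Submission
  imports Defs "HOL-Real_Asymp.Real_Asymp"
begin

text \<open>Method of types. A sequence of empirical distributions \<open>\<mu>\<close> has probability at most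
  \<open>exp (- \<Sum>\<^sub>j \<Sum>\<^sub>a n\<^sub>j\<^sub>a KL(\<mu>\<^sub>j\<^sub>a \<parallel> \<nu>\<^sub>a))\<close> under the batched scheme, where \<open>n\<^sub>j\<^sub>a\<close> is the number
  of pulls of arm \<open>a\<close> in batch \<open>j\<close>; for admissible horizons the exponent is exactly
  \<open>T \<cdot> cost \<mu>\<close>. Every batch of at most \<open>T\<close> samples produces one of polynomially many
  empirical distributions, so the support of the scheme has polynomial size in \<open>T\<close> and
  \<open>P[Q\<^sup>B \<in> \<Gamma>] \<le> poly(T) \<cdot> exp (- T inf\<^sub>\<Gamma> cost)\<close>, which gives the bound on the liminf.\<close>

section \<open>Types of i.i.d.\ samples\<close>

lemma set_pmf_iid: "set_pmf (iid n p) \<subseteq> {xs. length xs = n}"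
  by (induction n) auto

lemma pmf_map_Cons: "pmf (map_pmf (Cons x) M) (y # ys) = (if x = y then pmf M ys else 0)"
proof (cases "x = y")
  case True
  then show ?thesis by (simp add: pmf_map_inj')
next
  case False
  then have "Cons x -` {y # ys} = {}" by auto
  with False show ?thesis by (simp add: pmf_map)
qed

lemma pmf_iid: "length xs = n \<Longrightarrow> pmf (iid n p) xs = prod_list (map (pmf p) xs)"
proof (induction n arbitrary: xs)
  case 0
  then show ?case by simp
next
  case (Suc n)
  then obtain y ys where xs: "xs = y # ys" and len: "length ys = n" by (cases xs) auto
  have "pmf (iid (Suc n) p) xs = (LINT x|measure_pmf p. (if x = y then pmf (iid n p) ys else 0))"
    by (simp add: xs pmf_bind pmf_map_Cons)
  also have "\<dots> = (\<Sum>x\<in>{y}. pmf p x *\<^sub>R (if x = y then pmf (iid n p) ys else 0))"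
    by (rule integral_measure_pmf) (auto split: if_splits)
  finally show ?case by (simp add: xs Suc.IH[OF len])
qed

lemma sum_prod_list_lists_length:
  fixes f :: "'a::finite \<Rightarrow> real"
  shows "(\<Sum>xs\<in>{xs. length xs = n}. prod_list (map f xs)) = (\<Sum>x\<in>UNIV. f x) ^ n"
proof (induction n)
  case 0
  then show ?case by simp
next
  case (Suc n)
  have lists_Suc: "{xs::'a list. length xs = Suc n} = (\<lambda>(x, xs). x # xs) ` (UNIV \<times> {xs. length xs = n})"
    by (auto simp: image_def length_Suc_conv)
  have inj: "inj_on (\<lambda>(x, xs). x # xs) (UNIV \<times> {xs::'a list. length xs = n})"
    by (auto simp: inj_on_def)
  have "(\<Sum>xs\<in>{xs. length xs = Suc n}. prod_list (map f xs))
      = (\<Sum>(x, xs)\<in>UNIV \<times> {xs. length xs = n}. f x * prod_list (map f xs))"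
    unfolding lists_Suc by (subst sum.reindex[OF inj]) (simp add: case_prod_beta)
  also have "\<dots> = (\<Sum>x\<in>UNIV. f x * (\<Sum>xs\<in>{xs. length xs = n}. prod_list (map f xs)))"
    by (simp add: sum.cartesian_product[symmetric] sum_distrib_left)
  finally show ?case by (simp add: Suc.IH sum_distrib_right[symmetric])
qed

lemma sum_list_map_eq_sum_count_UNIV:
  fixes g :: "'a::finite \<Rightarrow> real"
  shows "sum_list (map g xs) = (\<Sum>x\<in>UNIV. real (count_list xs x) * g x)"
proof (induction xs)
  case Nil
  then show ?case by simp
next
  case (Cons y xs)
  have "(\<Sum>x\<in>UNIV. real (count_list (y # xs) x) * g x)
      = (\<Sum>x\<in>UNIV. real (count_list xs x) * g x + (if y = x then g x else 0))"
    by (rule sum.cong) (auto simp: algebra_simps)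
  with Cons show ?case by (simp add: sum.distrib del: count_list.simps)
qed

lemma prod_list_eq_exp_sum_count_ln:
  fixes f :: "'a::finite \<Rightarrow> real"
  assumes "\<forall>x\<in>set xs. 0 < f x"
  shows "prod_list (map f xs) = exp (\<Sum>x\<in>UNIV. real (count_list xs x) * ln (f x))"
proof -
  have "prod_list (map f xs) = exp (sum_list (map (\<lambda>x. ln (f x)) xs))"
    using assms by (induction xs) (auto simp: exp_add)
  then show ?thesis by (simp add: sum_list_map_eq_sum_count_UNIV)
qed

lemma emp_pos: "xs \<noteq> [] \<Longrightarrow> x \<in> set xs \<Longrightarrow> 0 < emp q0 xs x"
  using count_list_0_iff[of xs x] by (auto simp: emp_def)

lemma emp_in_pdists:
  assumes "xs \<noteq> [] \<or> q0 \<in> pdists"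
  shows "emp q0 (xs :: 'x::finite list) \<in> pdists"
proof (cases "xs = []")
  case False
  have "(\<Sum>x\<in>UNIV. real (count_list xs x)) = real (length xs)"
    using sum_count_set[of xs UNIV] by (simp flip: of_nat_sum)
  with False show ?thesis by (auto simp: emp_def pdists_def sum_divide_distrib[symmetric])
qed (use assms in \<open>simp add: emp_def\<close>)

lemma pmf_iid_type:
  fixes p :: "'x::finite pmf"
  assumes full: "\<And>x. 0 < pmf p x" and len: "length xs = n" and ne: "xs \<noteq> []"
  shows "pmf (iid n p) xs = exp (- real n * KL (emp q0 xs) (pmf p)) * prod_list (map (emp q0 xs) xs)"
proof -
  define q where "q = emp q0 xs"
  have count: "real (count_list xs x) = real n * q x" for x
    using ne len by (auto simp: q_def emp_def)
  have q_nonneg: "0 \<le> q x" for x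
    using ne by (simp add: q_def emp_def)
  have summand: "real (count_list xs x) * ln (pmf p x)
      = - real n * (if q x = 0 then 0 else q x * ln (q x / pmf p x)) + real (count_list xs x) * ln (q x)"
    for x
  proof (cases "q x = 0")
    case False
    then have "0 < q x" using q_nonneg[of x] by linarith
    then show ?thesis using count[of x] full[of x] by (simp add: ln_div algebra_simps)
  qed (simp add: count)
  have "pmf (iid n p) xs = exp (\<Sum>x\<in>UNIV. real (count_list xs x) * ln (pmf p x))"
    using pmf_iid[OF len] prod_list_eq_exp_sum_count_ln[of xs "pmf p"] full by simp
  also have "(\<Sum>x\<in>UNIV. real (count_list xs x) * ln (pmf p x))
      = - real n * KL q (pmf p) + (\<Sum>x\<in>UNIV. real (count_list xs x) * ln (q x))"
    by (simp add: summand KL_def sum_subtractf sum_negf sum_distrib_left)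
  finally show ?thesis
    using prod_list_eq_exp_sum_count_ln[of xs q] emp_pos[OF ne]
    by (simp add: q_def mult_exp_exp)
qed

lemma pmf_emp_iid_le:
  fixes p :: "'x::finite pmf"
  assumes full: "\<And>x. 0 < pmf p x"
  shows "pmf (map_pmf (emp q0) (iid n p)) q \<le> exp (- real n * KL q (pmf p))"
proof (cases "n = 0")
  case True
  then show ?thesis by (simp add: pmf_le_1)
next
  case False
  define type_seqs where "type_seqs = {xs::'x list. length xs = n \<and> emp q0 xs = q}"
  have fin_lists: "finite {xs::'x list. length xs = n}"
    using finite_lists_length_eq[of "UNIV::'x set" n] by simp
  then have fin_type_seqs: "finite type_seqs" unfolding type_seqs_def by (rule finite_subset[rotated]) auto
  have "pmf (map_pmf (emp q0) (iid n p)) q = measure (iid n p) (emp q0 -` {q} \<inter> set_pmf (iid n p))"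
    by (simp add: pmf_map measure_Int_set_pmf)
  also have "\<dots> \<le> measure (iid n p) type_seqs"
    using set_pmf_iid[of n p] by (intro measure_pmf.finite_measure_mono) (auto simp: type_seqs_def)
  also have "\<dots> = (\<Sum>xs\<in>type_seqs. pmf (iid n p) xs)"
    by (rule measure_measure_pmf_finite[OF fin_type_seqs])
  also have "\<dots> \<le> exp (- real n * KL q (pmf p))"
  proof (cases "type_seqs = {}")
    case False
    then obtain xs0 where "length xs0 = n" "emp q0 xs0 = q" by (auto simp: type_seqs_def)
    with \<open>n \<noteq> 0\<close> have "q \<in> pdists"
      using emp_in_pdists[of xs0 q0] by auto
    then have q_nonneg: "0 \<le> q x" and q_sum: "(\<Sum>x\<in>UNIV. q x) = 1" for x
      by (auto simp: pdists_def)
    have "(\<Sum>xs\<in>type_seqs. pmf (iid n p) xs) = exp (- real n * KL q (pmf p)) * (\<Sum>xs\<in>type_seqs. prod_list (map q xs))"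
      unfolding sum_distrib_left
    proof (intro sum.cong refl)
      fix xs assume "xs \<in> type_seqs"
      with \<open>n \<noteq> 0\<close> show "pmf (iid n p) xs = exp (- real n * KL q (pmf p)) * prod_list (map q xs)"
        using pmf_iid_type[OF full, of xs n q0] by (auto simp: type_seqs_def)
    qed
    also have "(\<Sum>xs\<in>type_seqs. prod_list (map q xs)) \<le> (\<Sum>xs\<in>{xs. length xs = n}. prod_list (map q xs))"
      using fin_lists q_nonneg by (intro sum_mono2) (auto simp: type_seqs_def intro!: prod_list_nonneg)
    also have "\<dots> = 1"
      by (simp add: sum_prod_list_lists_length q_sum)
    finally show ?thesis by simp
  qed simp
  finally show ?thesis .
qed

lemma pmf_batch_le:
  fixes \<nu> :: "'k::finite \<Rightarrow> 'x::finite pmf"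
  assumes full: "\<And>a x. 0 < pmf (\<nu> a) x"
  shows "pmf (batch q0 \<nu> n) f \<le> exp (- (\<Sum>a\<in>UNIV. real (n a) * KL (f a) (pmf (\<nu> a))))"
proof -
  have "pmf (batch q0 \<nu> n) f = (\<Prod>a\<in>UNIV. pmf (map_pmf (emp q0) (iid (n a) (\<nu> a))) (f a))"
    unfolding batch_def by (subst pmf_Pi) auto
  also have "\<dots> \<le> (\<Prod>a\<in>UNIV. exp (- real (n a) * KL (f a) (pmf (\<nu> a))))"
    by (intro prod_mono conjI pmf_nonneg pmf_emp_iid_le full)
  also have "\<dots> = exp (- (\<Sum>a\<in>UNIV. real (n a) * KL (f a) (pmf (\<nu> a))))"
    by (simp add: exp_sum sum_negf[symmetric])
  finally show ?thesis .
qed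

section \<open>The batched sampling scheme\<close>

lemma set_pmf_batchD:
  fixes \<nu> :: "'k::finite \<Rightarrow> 'x::finite pmf"
  assumes "q \<in> set_pmf (batch q0 \<nu> n)"
  obtains xs where "xs \<in> set_pmf (iid (n a) (\<nu> a))" "q a = emp q0 xs"
  using assms unfolding batch_def by (subst (asm) set_Pi_pmf) (auto simp: PiE_dflt_def)

lemma scheme_SucE:
  assumes "\<mu> \<in> set_pmf (scheme T B w \<nu> q0 (Suc j))"
  obtains h q where "h \<in> set_pmf (scheme T B w \<nu> q0 j)"
    "q \<in> set_pmf (batch q0 \<nu> (pulls T B w (Suc j) h))" "\<mu> = h(Suc j := q)"
  using assms unfolding scheme.simps set_bind_pmf set_map_pmf by blast

lemma set_pmf_scheme_subset_DSeq:
  fixes \<nu> :: "'k::finite \<Rightarrow> 'x::finite pmf"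
  assumes q0: "q0 \<in> pdists"
  shows "set_pmf (scheme T B w \<nu> q0 j) \<subseteq> DSeq j"
proof (induction j)
  case 0
  then show ?case by (auto simp: DSeq_def)
next
  case (Suc j)
  show ?case
  proof
    fix \<mu> assume "\<mu> \<in> set_pmf (scheme T B w \<nu> q0 (Suc j))"
    then obtain h q where h: "h \<in> set_pmf (scheme T B w \<nu> q0 j)"
      and q: "q \<in> set_pmf (batch q0 \<nu> (pulls T B w (Suc j) h))" and \<mu>: "\<mu> = h(Suc j := q)"
      by (rule scheme_SucE)
    have "q a \<in> pdists" for a
      by (metis set_pmf_batchD[OF q] emp_in_pdists q0)
    with h Suc.IH show "\<mu> \<in> DSeq (Suc j)"
      unfolding \<mu> by (auto simp: DSeq_def)
  qed
qed

lemma prefix_Suc_DSeq: "\<mu> \<in> DSeq j \<Longrightarrow> prefix (Suc j) \<mu> = \<mu>"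
  by (auto simp: DSeq_def prefix_def fun_eq_iff)

lemma prefix_upd: "i \<le> j \<Longrightarrow> prefix i (\<mu>(j := x)) = prefix i \<mu>"
  by (auto simp: prefix_def fun_eq_iff)

lemma DSeq_extend:
  fixes h :: "nat \<Rightarrow> 'k \<Rightarrow> 'x::finite \<Rightarrow> real" and q0 :: "'x \<Rightarrow> real"
  assumes q0: "q0 \<in> pdists" and h: "h \<in> DSeq j" and "j \<le> B"
  obtains \<mu> where "\<mu> \<in> DSeq B" "prefix (Suc j) \<mu> = h"
proof
  define \<mu> where "\<mu> i = (if i \<in> {1..j} then h i else if i \<in> {1..B} then (\<lambda>_. q0) else (\<lambda>_ _. 0))" for i
  show "\<mu> \<in> DSeq B"
    using h q0 \<open>j \<le> B\<close> by (auto simp: DSeq_def \<mu>_def)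
  show "prefix (Suc j) \<mu> = h"
    using h by (auto simp: DSeq_def prefix_def \<mu>_def fun_eq_iff)
qed

lemma prefix_in_set_pmf_scheme:
  fixes \<nu> :: "'k::finite \<Rightarrow> 'x::finite pmf"
  assumes q0: "q0 \<in> pdists"
  shows "\<mu> \<in> set_pmf (scheme T B w \<nu> q0 j) \<Longrightarrow> i \<le> j \<Longrightarrow>
    prefix (Suc i) \<mu> \<in> set_pmf (scheme T B w \<nu> q0 i)"
proof (induction j arbitrary: \<mu>)
  case 0
  then show ?case by (auto simp: prefix_def)
next
  case (Suc j)
  show ?case
  proof (cases "i = Suc j")
    case True
    then show ?thesis
      using Suc.prems(1) prefix_Suc_DSeq set_pmf_scheme_subset_DSeq[OF q0] by (metis subsetD)
  next
    case False
    obtain h q where h: "h \<in> set_pmf (scheme T B w \<nu> q0 j)" and \<mu>: "\<mu> = h(Suc j := q)"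
      using Suc.prems(1) by (rule scheme_SucE)
    have "prefix (Suc i) \<mu> = prefix (Suc i) h"
      unfolding \<mu> by (rule prefix_upd) (use False Suc.prems(2) in simp)
    with False Suc.prems(2) show ?thesis
      using Suc.IH[OF h] by simp
  qed
qed

lemma pmf_scheme_Suc:
  fixes \<nu> :: "'k::finite \<Rightarrow> 'x::finite pmf" and \<mu> :: "nat \<Rightarrow> 'k \<Rightarrow> 'x \<Rightarrow> real" and j :: nat
  assumes q0: "q0 \<in> pdists"
  defines "h0 \<equiv> \<mu>(Suc j := (\<lambda>_ _. 0))"
  shows "pmf (scheme T B w \<nu> q0 (Suc j)) \<mu>
    = pmf (scheme T B w \<nu> q0 j) h0 * pmf (batch q0 \<nu> (pulls T B w (Suc j) h0)) (\<mu> (Suc j))"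
proof -
  define g where "g h = map_pmf (\<lambda>q. h(Suc j := q)) (batch q0 \<nu> (pulls T B w (Suc j) h))" for h
  have "pmf (scheme T B w \<nu> q0 (Suc j)) \<mu> = (LINT h|measure_pmf (scheme T B w \<nu> q0 j). pmf (g h) \<mu>)"
    by (simp add: g_def pmf_bind)
  also have "\<dots> = (\<Sum>h\<in>{h0}. pmf (scheme T B w \<nu> q0 j) h *\<^sub>R pmf (g h) \<mu>)"
  proof (rule integral_measure_pmf)
    text \<open>Only the history \<open>h0\<close> can be extended to \<open>\<mu>\<close>, since histories vanish at \<open>Suc j\<close>.\<close>
    fix h assume h: "h \<in> set_pmf (scheme T B w \<nu> q0 j)" and "pmf (g h) \<mu> \<noteq> 0"
    then obtain q where "\<mu> = h(Suc j := q)" by (auto simp: g_def simp flip: set_pmf_iff)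
    moreover have "h \<in> DSeq j"
      using h set_pmf_scheme_subset_DSeq[OF q0] by blast
    then have "h (Suc j) = (\<lambda>_ _. 0)"
      by (simp add: DSeq_def)
    ultimately show "h \<in> {h0}" by (auto simp: h0_def)
  qed simp
  also have "\<dots> = pmf (scheme T B w \<nu> q0 j) h0 * pmf (batch q0 \<nu> (pulls T B w (Suc j) h0)) (\<mu> (Suc j))"
  proof -
    have "inj (\<lambda>q. h0(Suc j := q))" by (rule injI) (metis fun_upd_same)
    then have "pmf (g h0) (h0(Suc j := \<mu> (Suc j))) = pmf (batch q0 \<nu> (pulls T B w (Suc j) h0)) (\<mu> (Suc j))"
      unfolding g_def by (rule pmf_map_inj')
    then show ?thesis by (simp add: h0_def)
  qed
  finally show ?thesis .
qed

lemma pmf_scheme_le: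
  fixes \<nu> :: "'k::finite \<Rightarrow> 'x::finite pmf"
  assumes q0: "q0 \<in> pdists" and full: "\<And>a x. 0 < pmf (\<nu> a) x"
  shows "pmf (scheme T B w \<nu> q0 j) \<mu> \<le>
    exp (- (\<Sum>i\<in>{1..j}. \<Sum>a\<in>UNIV. real (pulls T B w i (prefix i \<mu>) a) * KL (\<mu> i a) (pmf (\<nu> a))))"
proof (induction j arbitrary: \<mu>)
  case 0
  then show ?case by (simp add: pmf_le_1)
next
  case (Suc j)
  define S where "S j \<mu> = (\<Sum>i\<in>{1..j}. \<Sum>a\<in>UNIV. real (pulls T B w i (prefix i \<mu>) a) * KL (\<mu> i a) (pmf (\<nu> a)))"
    for j \<mu>
  define h0 where "h0 = \<mu>(Suc j := (\<lambda>_ _. 0))"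
  show ?case
  proof (cases "\<mu> \<in> set_pmf (scheme T B w \<nu> q0 (Suc j))")
    case False
    then show ?thesis by (simp add: set_pmf_eq)
  next
    case True
    then have "\<mu> \<in> DSeq (Suc j)"
      using set_pmf_scheme_subset_DSeq[OF q0] by blast
    then have "prefix (Suc j) \<mu> = h0"
      by (auto simp: DSeq_def prefix_def h0_def fun_eq_iff)
    moreover have "S j h0 = S j \<mu>"
      unfolding S_def h0_def by (intro sum.cong refl) (simp add: prefix_upd)
    ultimately have S_Suc: "S (Suc j) \<mu>
        = S j h0 + (\<Sum>a\<in>UNIV. real (pulls T B w (Suc j) h0 a) * KL (\<mu> (Suc j) a) (pmf (\<nu> a)))"
      by (simp add: S_def)
    have "pmf (scheme T B w \<nu> q0 (Suc j)) \<mu>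
        = pmf (scheme T B w \<nu> q0 j) h0 * pmf (batch q0 \<nu> (pulls T B w (Suc j) h0)) (\<mu> (Suc j))"
      unfolding h0_def by (rule pmf_scheme_Suc[OF q0])
    also have "\<dots> \<le> exp (- S j h0) * exp (- (\<Sum>a\<in>UNIV. real (pulls T B w (Suc j) h0 a) * KL (\<mu> (Suc j) a) (pmf (\<nu> a))))"
      using Suc.IH[of h0] by (intro mult_mono pmf_batch_le full) (auto simp: S_def)
    also have "\<dots> = exp (- S (Suc j) \<mu>)"
      by (simp add: S_Suc mult_exp_exp)
    finally show ?thesis unfolding S_def .
  qed
qed

section \<open>Polynomially many types\<close>

text \<open>Empirical distributions of at most \<open>T\<close> samples; \<open>q0\<close> stands for the empty sample.\<close>

definition emp_types :: "('x::finite \<Rightarrow> real) \<Rightarrow> nat \<Rightarrow> ('x \<Rightarrow> real) set" where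
  "emp_types q0 T = insert q0 ((\<lambda>(k, m) x. real (k x) / real m) ` ((UNIV \<rightarrow>\<^sub>E {..T}) \<times> {1..T}))"

lemma finite_emp_types: "finite (emp_types q0 T)"
  by (simp add: emp_types_def finite_PiE)

lemma card_emp_types_le: "card (emp_types (q0 :: 'x::finite \<Rightarrow> real) T) \<le> (T + 1) ^ (CARD('x) + 1)"
proof -
  let ?A = "(UNIV \<rightarrow>\<^sub>E {..T}) \<times> {1..T} :: (('x \<Rightarrow> nat) \<times> nat) set"
  have "card (emp_types q0 T) \<le> Suc (card ((\<lambda>(k, m) x. real (k x) / real m) ` ?A))"
    unfolding emp_types_def by (simp add: card_insert_if finite_PiE)
  also have "\<dots> \<le> Suc (card ?A)"
    by (rule Suc_le_mono[THEN iffD2], rule card_image_le) (simp add: finite_PiE)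
  also have "\<dots> = Suc ((T + 1) ^ CARD('x) * T)"
    by (simp add: card_cartesian_product card_PiE)
  also have "\<dots> \<le> (T + 1) ^ (CARD('x) + 1)"
    using one_le_power[of "T + 1" "CARD('x)"] by (simp add: algebra_simps)
  finally show ?thesis .
qed

lemma emp_in_emp_types:
  assumes "length xs \<le> T"
  shows "emp q0 xs \<in> emp_types q0 T"
proof (cases "xs = []")
  case False
  have "(count_list xs, length xs) \<in> (UNIV \<rightarrow>\<^sub>E {..T}) \<times> {1..T}"
    using assms False count_le_length[of xs] by (auto intro: order.trans simp: Suc_le_eq)
  then show ?thesis
    unfolding emp_types_def by (intro insertI2 rev_image_eqI[of "(count_list xs, length xs)"])
      (auto simp: emp_def False)
qed (simp add: emp_def emp_types_def)

definition seqs_with_entries :: "('x \<Rightarrow> real) set \<Rightarrow> nat \<Rightarrow> (nat \<Rightarrow> 'k \<Rightarrow> 'x \<Rightarrow> real) set" where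
  "seqs_with_entries E B =
    {\<mu>. (\<forall>i\<in>{1..B}. \<forall>a. \<mu> i a \<in> E) \<and> (\<forall>i. i \<notin> {1..B} \<longrightarrow> \<mu> i = (\<lambda>_ _. 0))}"

lemma seqs_with_entries_embedding:
  shows "inj_on (\<lambda>\<mu>. restrict (\<lambda>(i, a). \<mu> i a) ({1..B} \<times> UNIV)) (seqs_with_entries E B)"
    and "(\<lambda>\<mu>. restrict (\<lambda>(i, a). \<mu> i a) ({1..B} \<times> UNIV)) ` seqs_with_entries E B
      \<subseteq> ({1..B} \<times> UNIV) \<rightarrow>\<^sub>E E"
proof -
  show "inj_on (\<lambda>\<mu>. restrict (\<lambda>(i, a). \<mu> i a) ({1..B} \<times> UNIV)) (seqs_with_entries E B)"
  proof (rule inj_onI, rule ext, rule ext)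
    fix \<mu> \<mu>' i a
    assume \<mu>: "\<mu> \<in> seqs_with_entries E B" and \<mu>': "\<mu>' \<in> seqs_with_entries E B"
      and eq: "restrict (\<lambda>(i, a). \<mu> i a) ({1..B} \<times> UNIV) = restrict (\<lambda>(i, a). \<mu>' i a) ({1..B} \<times> UNIV)"
    show "\<mu> i a = \<mu>' i a"
    proof (cases "i \<in> {1..B}")
      case True
      then show ?thesis using fun_cong[OF eq, of "(i, a)"] by simp
    qed (use \<mu> \<mu>' in \<open>simp add: seqs_with_entries_def\<close>)
  qed
  show "(\<lambda>\<mu>. restrict (\<lambda>(i, a). \<mu> i a) ({1..B} \<times> UNIV)) ` seqs_with_entries E B
      \<subseteq> ({1..B} \<times> UNIV) \<rightarrow>\<^sub>E E"
    by (auto simp: seqs_with_entries_def)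
qed

lemma finite_seqs_with_entries:
  "finite E \<Longrightarrow> finite (seqs_with_entries E B :: (nat \<Rightarrow> 'k::finite \<Rightarrow> 'x \<Rightarrow> real) set)"
  using seqs_with_entries_embedding
  by (metis finite_PiE finite_cartesian_product finite_atLeastAtMost finite_imageD finite_subset finite)

lemma card_seqs_with_entries_le:
  assumes "finite E"
  shows "card (seqs_with_entries E B :: (nat \<Rightarrow> 'k::finite \<Rightarrow> 'x \<Rightarrow> real) set) \<le> card E ^ (B * CARD('k))"
proof -
  have "card (seqs_with_entries E B :: (nat \<Rightarrow> 'k \<Rightarrow> 'x \<Rightarrow> real) set) \<le> card (({1..B} \<times> (UNIV :: 'k set)) \<rightarrow>\<^sub>E E)"
    using assms by (intro card_inj_on_le[OF seqs_with_entries_embedding]) (auto simp: finite_PiE)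
  then show ?thesis by (simp add: card_PiE card_cartesian_product)
qed

section \<open>Exponential decay of the probability\<close>

context
  fixes B :: nat
    and w :: "nat \<Rightarrow> (nat \<Rightarrow> 'k::finite \<Rightarrow> 'x::finite \<Rightarrow> real) \<Rightarrow> 'k \<Rightarrow> real"
    and q0 :: "'x \<Rightarrow> real"
  assumes B_pos: "0 < B"
    and q0: "q0 \<in> pdists"
    and w_simplex: "\<And>j \<mu>. j \<in> {1..B} \<Longrightarrow> \<mu> \<in> DSeq B \<Longrightarrow>
                      (\<forall>a. 0 \<le> w j (prefix j \<mu>) a) \<and> (\<Sum>a\<in>UNIV. w j (prefix j \<mu>) a) = 1"
begin

lemma w_scheme_bounds:
  assumes h: "h \<in> set_pmf (scheme T B w \<nu> q0 j)" and "j < B"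
  shows "0 \<le> w (Suc j) h a" "w (Suc j) h a \<le> 1"
proof -
  obtain \<mu> where "\<mu> \<in> DSeq B" "prefix (Suc j) \<mu> = h"
    using DSeq_extend[OF q0 _ less_imp_le[OF \<open>j < B\<close>]] h set_pmf_scheme_subset_DSeq[OF q0] by blast
  then have nonneg: "\<forall>a. 0 \<le> w (Suc j) h a" and sum: "(\<Sum>a\<in>UNIV. w (Suc j) h a) = 1"
    using w_simplex[of "Suc j" \<mu>] \<open>j < B\<close> by auto
  then show "0 \<le> w (Suc j) h a" by simp
  show "w (Suc j) h a \<le> 1"
    using member_le_sum[of a UNIV "w (Suc j) h"] nonneg sum by simp
qed

lemma pulls_scheme_le:
  assumes "h \<in> set_pmf (scheme T B w \<nu> q0 j)" and "j < B"
  shows "pulls T B w (Suc j) h a \<le> T"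
proof -
  have "w (Suc j) h a * real T \<le> real T"
    using w_scheme_bounds[OF assms] by (intro mult_left_le_one_le) auto
  also have "\<dots> \<le> real T * real B"
    using B_pos by (simp add: mult_le_cancel_left1)
  finally have "w (Suc j) h a * real T \<le> real T * real B" .
  then have "w (Suc j) h a * real T / real B \<le> real T"
    using B_pos by (simp add: divide_le_eq)
  then show ?thesis unfolding pulls_def by linarith
qed

lemma scheme_entries_emp_types:
  "\<mu> \<in> set_pmf (scheme T B w \<nu> q0 j) \<Longrightarrow> j \<le> B \<Longrightarrow> i \<in> {1..j} \<Longrightarrow> \<mu> i a \<in> emp_types q0 T"
proof (induction j arbitrary: \<mu>)
  case 0
  then show ?case by simp
next
  case (Suc j)
  obtain h q where h: "h \<in> set_pmf (scheme T B w \<nu> q0 j)"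
    and q: "q \<in> set_pmf (batch q0 \<nu> (pulls T B w (Suc j) h))" and \<mu>: "\<mu> = h(Suc j := q)"
    using Suc.prems(1) by (rule scheme_SucE)
  show ?case
  proof (cases "i = Suc j")
    case True
    obtain xs where xs: "xs \<in> set_pmf (iid (pulls T B w (Suc j) h a) (\<nu> a))" "q a = emp q0 xs"
      by (rule set_pmf_batchD[OF q])
    have "length xs = pulls T B w (Suc j) h a"
      using xs(1) set_pmf_iid by blast
    then have "length xs \<le> T"
      using pulls_scheme_le[OF h] Suc.prems(2) by simp
    then show ?thesis using emp_in_emp_types xs(2) True \<mu> by simp
  next
    case False
    then show ?thesis using Suc.IH[OF h] Suc.prems \<mu> by simp
  qed
qed

lemma set_pmf_scheme_subset_seqs:
  "set_pmf (scheme T B w \<nu> q0 B) \<subseteq> seqs_with_entries (emp_types q0 T) B"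
proof
  fix \<mu> assume \<mu>: "\<mu> \<in> set_pmf (scheme T B w \<nu> q0 B)"
  then have "\<mu> \<in> DSeq B"
    using set_pmf_scheme_subset_DSeq[OF q0] by blast
  with scheme_entries_emp_types[OF \<mu>] show "\<mu> \<in> seqs_with_entries (emp_types q0 T) B"
    by (simp add: seqs_with_entries_def DSeq_def)
qed

lemma card_set_pmf_scheme_le:
  "card (set_pmf (scheme T B w \<nu> q0 B)) \<le> (T + 1) ^ ((CARD('x) + 1) * (B * CARD('k)))"
proof -
  have "card (set_pmf (scheme T B w \<nu> q0 B)) \<le> card (seqs_with_entries (emp_types q0 T) B :: (nat \<Rightarrow> 'k \<Rightarrow> 'x \<Rightarrow> real) set)"
    by (intro card_mono finite_seqs_with_entries finite_emp_types set_pmf_scheme_subset_seqs)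
  also have "\<dots> \<le> card (emp_types q0 T) ^ (B * CARD('k))"
    by (intro card_seqs_with_entries_le finite_emp_types)
  also have "\<dots> \<le> ((T + 1) ^ (CARD('x) + 1)) ^ (B * CARD('k))"
    by (intro power_mono card_emp_types_le) simp
  finally show ?thesis by (simp only: power_mult)
qed

lemma pulls_KL_sum_eq_cost:
  assumes T: "T \<in> admissible B w \<nu> q0" and \<mu>: "\<mu> \<in> set_pmf (scheme T B w \<nu> q0 B)"
  shows "(\<Sum>i\<in>{1..B}. \<Sum>a\<in>UNIV. real (pulls T B w i (prefix i \<mu>) a) * KL (\<mu> i a) (pmf (\<nu> a)))
    = real T * cost B w \<nu> \<mu>"
proof -
  have pulls: "real (pulls T B w i (prefix i \<mu>) a) = w i (prefix i \<mu>) a * real T / real B"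
    if i: "i \<in> {1..B}" for i a
  proof -
    have "prefix (Suc (i - 1)) \<mu> \<in> set_pmf (scheme T B w \<nu> q0 (i - 1))"
      using i by (intro prefix_in_set_pmf_scheme[OF q0 \<mu>]) auto
    then have h: "prefix i \<mu> \<in> set_pmf (scheme T B w \<nu> q0 (i - 1))"
      using i by simp
    with T i have "w i (prefix i \<mu>) a * real T / real B \<in> \<int>"
      unfolding admissible_def by blast
    then obtain k where k: "w i (prefix i \<mu>) a * real T / real B = of_int k"
      by (rule Ints_cases)
    have "0 \<le> w (Suc (i - 1)) (prefix i \<mu>) a"
      using i by (intro w_scheme_bounds(1)[OF h]) auto
    then have "0 \<le> w i (prefix i \<mu>) a"
      using i by simp
    then have "0 \<le> k"
      using k by (metis of_int_0_le_iff divide_nonneg_nonneg mult_nonneg_nonneg of_nat_0_le_iff)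
    then show ?thesis unfolding pulls_def k by simp
  qed
  show ?thesis
    by (simp add: pulls cost_def sum_distrib_left ac_simps)
qed

lemma prob_scheme_le:
  assumes full: "\<And>a x. 0 < pmf (\<nu> a) x"
    and T: "T \<in> admissible B w \<nu> q0"
    and z: "\<And>\<mu>. \<mu> \<in> \<Gamma> \<Longrightarrow> z \<le> cost B w \<nu> \<mu>"
  shows "measure_pmf.prob (scheme T B w \<nu> q0 B) \<Gamma>
    \<le> (real T + 1) ^ ((CARD('x) + 1) * (B * CARD('k))) * exp (- (real T * z))"
proof -
  define M where "M = scheme T B w \<nu> q0 B"
  define bound where "bound = exp (- (real T * z))"
  have fin: "finite (set_pmf M)"
    unfolding M_def
    by (rule finite_subset[OF set_pmf_scheme_subset_seqs]) (intro finite_seqs_with_entries finite_emp_types)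
  have pmf_le: "pmf M \<mu> \<le> bound" if "\<mu> \<in> \<Gamma> \<inter> set_pmf M" for \<mu>
  proof -
    have \<mu>: "\<mu> \<in> set_pmf (scheme T B w \<nu> q0 B)"
      using that by (simp add: M_def)
    have "pmf M \<mu> \<le> exp (- (\<Sum>i\<in>{1..B}. \<Sum>a\<in>UNIV.
        real (pulls T B w i (prefix i \<mu>) a) * KL (\<mu> i a) (pmf (\<nu> a))))"
      unfolding M_def by (rule pmf_scheme_le[OF q0 full])
    also have "\<dots> = exp (- (real T * cost B w \<nu> \<mu>))"
      by (simp only: pulls_KL_sum_eq_cost[OF T \<mu>])
    also have "\<dots> \<le> bound"
      unfolding bound_def using z that by (simp add: mult_left_mono)
    finally show ?thesis .
  qed
  have "measure_pmf.prob M \<Gamma> = measure_pmf.prob M (\<Gamma> \<inter> set_pmf M)"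
    by (simp add: measure_Int_set_pmf)
  also have "\<dots> = (\<Sum>\<mu>\<in>\<Gamma> \<inter> set_pmf M. pmf M \<mu>)"
    using fin by (intro measure_measure_pmf_finite) auto
  also have "\<dots> \<le> (\<Sum>\<mu>\<in>\<Gamma> \<inter> set_pmf M. bound)"
    by (rule sum_mono) (rule pmf_le)
  also have "\<dots> = real (card (\<Gamma> \<inter> set_pmf M)) * bound"
    by simp
  also have "\<dots> \<le> real (card (set_pmf M)) * bound"
    using fin by (intro mult_right_mono) (auto intro: card_mono simp: bound_def)
  also have "\<dots> \<le> (real T + 1) ^ ((CARD('x) + 1) * (B * CARD('k))) * bound"
  proof (rule mult_right_mono)
    have "real (card (set_pmf M)) \<le> real ((T + 1) ^ ((CARD('x) + 1) * (B * CARD('k))))"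
      unfolding M_def by (rule of_nat_mono[OF card_set_pmf_scheme_le])
    then show "real (card (set_pmf M)) \<le> (real T + 1) ^ ((CARD('x) + 1) * (B * CARD('k)))"
      by (simp add: add.commute)
  qed (simp add: bound_def)
  finally show ?thesis unfolding M_def bound_def .
qed

end

text \<open>The polynomial factor contributes only \<open>O(ln T / T)\<close> to the rate.\<close>

lemma Liminf_rate_ge:
  fixes P :: "nat \<Rightarrow> real" and I :: ereal
  assumes P_nonneg: "\<And>T. 0 \<le> P T"
    and P_le: "\<And>z T. ereal z < I \<Longrightarrow> T \<in> A \<Longrightarrow> P T \<le> (real T + 1) ^ e * exp (- (real T * z))"
  shows "I \<le> Liminf (inf sequentially (principal A)) (\<lambda>T. rate T (P T))"
  unfolding le_Liminf_iff
proof (intro allI impI)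
  fix y assume "y < I"
  show "\<forall>\<^sub>F T in inf sequentially (principal A). y < rate T (P T)"
  proof (cases y)
    case (real r)
    obtain z' where "y < z'" "z' < I"
      using dense[OF \<open>y < I\<close>] by blast
    then obtain z where "y < ereal z" "ereal z < I"
      by (cases z') auto
    with real have "r < z" by simp
    have "((\<lambda>T. real e * ln (real T + 1) / real T) \<longlongrightarrow> 0) sequentially"
      by real_asymp
    then have "\<forall>\<^sub>F T in sequentially. real e * ln (real T + 1) / real T < z - r"
      using \<open>r < z\<close> by (intro order_tendstoD(2)) auto
    then have ev: "\<forall>\<^sub>F T in sequentially. real e * ln (real T + 1) / real T < z - r \<and> 0 < T"
      by (intro eventually_conj eventually_gt_at_top)
    have rate_gt: "y < rate T (P T)"
      if T: "T \<in> A" "0 < T" "real e * ln (real T + 1) / real T < z - r" for T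
    proof (cases "P T = 0")
      case False
      then have P_pos: "0 < P T" using P_nonneg[of T] by simp
      have "ln (P T) \<le> ln ((real T + 1) ^ e * exp (- (real T * z)))"
        using P_le[OF \<open>ereal z < I\<close> T(1)] P_pos by simp
      also have "\<dots> = real e * ln (real T + 1) - real T * z"
        by (simp add: ln_mult ln_realpow)
      finally have "real T * z - real e * ln (real T + 1) \<le> - ln (P T)" by simp
      then have "(real T * z - real e * ln (real T + 1)) / real T \<le> - ln (P T) / real T"
        by (intro divide_right_mono) auto
      also have "(real T * z - real e * ln (real T + 1)) / real T = z - real e * ln (real T + 1) / real T"
        using T(2) by (simp add: field_simps)
      finally have "z - real e * ln (real T + 1) / real T \<le> - ln (P T) / real T" .
      with T(3) False show ?thesis by (simp add: rate_def real)
    qed (simp add: rate_def real)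
    show ?thesis
      unfolding eventually_inf_principal using ev by (rule eventually_mono) (use rate_gt in blast)
  qed (use \<open>y < I\<close> in \<open>simp_all add: rate_def\<close>)
qed

theorem mainTheorem11:
  fixes B :: nat
    and w :: "nat \<Rightarrow> (nat \<Rightarrow> 'k::finite \<Rightarrow> 'x::finite \<Rightarrow> real) \<Rightarrow> 'k \<Rightarrow> real"
    and \<nu> :: "'k \<Rightarrow> 'x pmf"
    and q0 :: "'x \<Rightarrow> real"
    and \<Gamma> :: "(nat \<Rightarrow> 'k \<Rightarrow> 'x \<Rightarrow> real) set"
  assumes B_pos: "0 < B"
    and full_support: "\<And>a. set_pmf (\<nu> a) = UNIV"
    and q0: "q0 \<in> pdists"
    and w_simplex: "\<And>j \<mu>. j \<in> {1..B} \<Longrightarrow> \<mu> \<in> DSeq B \<Longrightarrow>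
                      (\<forall>a. 0 \<le> w j (prefix j \<mu>) a) \<and> (\<Sum>a\<in>UNIV. w j (prefix j \<mu>) a) = 1"
    and Gamma: "\<Gamma> \<subseteq> DSeq B"
  shows "Liminf (inf sequentially (principal (admissible B w \<nu> q0)))
           (\<lambda>T. rate T (measure_pmf.prob (scheme T B w \<nu> q0 B) \<Gamma>))
         \<ge> (INF \<mu>\<in>closure \<Gamma>. ereal (cost B w \<nu> \<mu>))"
proof (rule Liminf_rate_ge)
  \<comment> \<open>The bound holds for every \<open>\<Gamma>\<close>.\<close>
  fix z T
  assume z: "ereal z < (INF \<mu>\<in>closure \<Gamma>. ereal (cost B w \<nu> \<mu>))" and T: "T \<in> admissible B w \<nu> q0"
  have full: "0 < pmf (\<nu> a) x" for a x
    using full_support by (simp add: pmf_positive_iff)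
  have z_le_cost: "z \<le> cost B w \<nu> \<mu>" if "\<mu> \<in> \<Gamma>" for \<mu>
  proof -
    have "(INF \<mu>\<in>closure \<Gamma>. ereal (cost B w \<nu> \<mu>)) \<le> ereal (cost B w \<nu> \<mu>)"
      using that closure_subset by (intro INF_lower) blast
    with z have "ereal z < ereal (cost B w \<nu> \<mu>)"
      by (rule less_le_trans)
    then show ?thesis by simp
  qed
  show "measure_pmf.prob (scheme T B w \<nu> q0 B) \<Gamma>
      \<le> (real T + 1) ^ ((CARD('x) + 1) * (B * CARD('k))) * exp (- (real T * z))"
    by (rule prob_scheme_le[where \<nu>=\<nu>, OF B_pos q0 w_simplex full T z_le_cost])
qed (rule measure_nonneg)

end
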